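(* Let ${\bf p},{\bf q}\in[0,1]^K$ with $q_k\le p_k$ for all $k$, let ${\bf u},{\bf v}\in\mathcal{S}_K$, and let $\Pi_{({\bf p},{\bf q})}\subseteq\mathcal{S}_K$ be an atomic lower and upper probability (ALUP) model generated by $({\bf p},{\bf q})$. If the aggregation scheme $({\bf u},{\bf v})$ induces Simpson's paradox in $({\bf p},{\bf q})$, then it incurs sure loss with respect to itself on $\Pi_{({\bf p},{\bf q})}$.
   Context: $\mathcal{S}_K=\{(v_1,\dots,v_K):\sum_k v_k=1,\ v_k\ge 0\}$. An ALUP model generated by $({\bf p},{\bf q})$ is a closed convex set $\Pi_{({\bf p},{\bf q})}$ of vectors $\boldsymbol\pi\in\mathcal{S}_K$ such that $\sup_{\boldsymbol\pi\in\Pi_{({\bf p},{\bf q})}}\pi_k=p_k$ and $\inf_{\boldsymbol\pi\in\Pi_{({\bf p},{\bf q})}}\pi_k=q_k$ for each $k$. The scheme $({\bf u},{\bf v})$ induces Simpson's paradox in $({\bf p},{\bf q})$ if ${\bf p}^\top{\bf u}<{\bf q}^\top{\bf v}$ or ${\bf q}^\top{\bf u}>{\bf p}^\top{\bf v}$. It incurs sure loss with respect to itself on a set $\Pi\subseteq\mathcal{S}_K$ if $\sup_{\boldsymbol\pi\in\Pi}\boldsymbol\pi^\top{\bf u}<\inf_{\boldsymbol\pi\in\Pi}\boldsymbol\pi^\top{\bf v}$ or $\inf_{\boldsymbol\pi\in\Pi}\boldsymbol\pi^\top{\bf u}>\sup_{\boldsymbol\pi\in\Pi}\boldsymbol\pi^\top{\bf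 v}$. *)

theory Defs
  imports "HOL-Analysis.Analysis"
begin

text \<open>The probability simplex S_K, with K = CARD('k).\<close>
definition prob_simplex :: "(real ^ 'k) set" where
  "prob_simplex = {v. (\<Sum>k\<in>UNIV. v $ k) = 1 \<and> (\<forall>k. v $ k \<ge> 0)}"

definition ALUP_model :: "real ^ 'k \<Rightarrow> real ^ 'k \<Rightarrow> (real ^ 'k) set \<Rightarrow> bool" where
  "ALUP_model p q PI \<longleftrightarrow> PI \<noteq> {} \<and> closed PI \<and> convex PI \<and> PI \<subseteq> prob_simplex \<and>
     (\<forall>k. (SUP pi\<in>PI. pi $ k) = p $ k \<and> (INF pi\<in>PI. pi $ k) = q $ k)"

definition induces_simpson :: "real ^ 'k \<Rightarrow> real ^ 'k \<Rightarrow> real ^ 'k \<Rightarrow> real ^ 'k \<Rightarrow> bool" where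
  "induces_simpson u v p q \<longleftrightarrow> p \<bullet> u < q \<bullet> v \<or> q \<bullet> u > p \<bullet> v"

definition sure_loss_self :: "real ^ 'k \<Rightarrow> real ^ 'k \<Rightarrow> (real ^ 'k) set \<Rightarrow> bool" where
  "sure_loss_self u v PI \<longleftrightarrow>
     (SUP pi\<in>PI. pi \<bullet> u) < (INF pi\<in>PI. pi \<bullet> v) \<or>
     (INF pi\<in>PI. pi \<bullet> u) > (SUP pi\<in>PI. pi \<bullet> v)"

end

theory Submission
  imports Defs
begin

(* Every pi in the model lies componentwise between q and p, so for a nonnegative weight
   vector w the range of pi \<bullet> w over the model lies in [q \<bullet> w, p \<bullet> w]. Simpson's paradox
   separates one of these outer intervals for u from the one for v, and the inner
   ranges inherit the separation. *)

lemma prob_simplex_nonneg: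
  assumes "x \<in> prob_simplex"
  shows "0 \<le> x $ k"
  using assms by (simp add: prob_simplex_def)

lemma prob_simplex_le_1:
  assumes "x \<in> prob_simplex"
  shows "x $ k \<le> 1"
proof -
  have "x $ k \<le> (\<Sum>j\<in>UNIV. x $ j)"
    using assms by (intro member_le_sum) (auto simp: prob_simplex_def)
  with assms show ?thesis by (simp add: prob_simplex_def)
qed

lemma ALUP_model_component_bounds:
  assumes model: "ALUP_model p q PI" and x: "x \<in> PI"
  shows "q $ k \<le> x $ k" "x $ k \<le> p $ k"
proof -
  have sub: "PI \<subseteq> prob_simplex"
    and sup: "(SUP pi\<in>PI. pi $ k) = p $ k" and inf: "(INF pi\<in>PI. pi $ k) = q $ k"
    using model by (auto simp: ALUP_model_def)
  have "bdd_below ((\<lambda>pi. pi $ k) ` PI)"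
    using sub prob_simplex_nonneg by (intro bdd_belowI[where m = 0]) blast
  from cINF_lower[OF this x] inf show "q $ k \<le> x $ k" by simp
  have "bdd_above ((\<lambda>pi. pi $ k) ` PI)"
    using sub prob_simplex_le_1 by (intro bdd_aboveI[where M = 1]) blast
  from cSUP_upper[OF x this] sup show "x $ k \<le> p $ k" by simp
qed

lemma inner_le_nonneg_weights:
  fixes a b w :: "real ^ 'k"
  assumes "\<And>k. a $ k \<le> b $ k" and "\<And>k. 0 \<le> w $ k"
  shows "a \<bullet> w \<le> b \<bullet> w"
  unfolding inner_vec_def by (intro sum_mono) (simp add: assms mult_right_mono)

lemma ALUP_model_inner_bounds:
  fixes w :: "real ^ 'k"
  assumes model: "ALUP_model p q PI" and w: "\<And>k. 0 \<le> w $ k"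
  shows "q \<bullet> w \<le> (INF pi\<in>PI. pi \<bullet> w)" "(SUP pi\<in>PI. pi \<bullet> w) \<le> p \<bullet> w"
proof -
  have ne: "PI \<noteq> {}" using model by (simp add: ALUP_model_def)
  show "q \<bullet> w \<le> (INF pi\<in>PI. pi \<bullet> w)"
  proof (rule cINF_greatest[OF ne])
    fix pi assume "pi \<in> PI"
    then show "q \<bullet> w \<le> pi \<bullet> w"
      using ALUP_model_component_bounds(1)[OF model] w by (intro inner_le_nonneg_weights)
  qed
  show "(SUP pi\<in>PI. pi \<bullet> w) \<le> p \<bullet> w"
  proof (rule cSUP_least[OF ne])
    fix pi assume "pi \<in> PI"
    then show "pi \<bullet> w \<le> p \<bullet> w"
      using ALUP_model_component_bounds(2)[OF model] w by (intro inner_le_nonneg_weights)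
  qed
qed

theorem lemma4p2:
  fixes p q u v :: "real ^ 'k" and PI :: "(real ^ 'k) set"
  assumes "\<forall>k. 0 \<le> q $ k \<and> q $ k \<le> p $ k \<and> p $ k \<le> 1"
    and "u \<in> prob_simplex" and "v \<in> prob_simplex"
    and "ALUP_model p q PI"
    and "induces_simpson u v p q"
  shows "sure_loss_self u v PI"
proof -
  have u: "q \<bullet> u \<le> (INF pi\<in>PI. pi \<bullet> u)" "(SUP pi\<in>PI. pi \<bullet> u) \<le> p \<bullet> u"
    using ALUP_model_inner_bounds[OF assms(4) prob_simplex_nonneg[OF assms(2)]] by blast+
  have v: "q \<bullet> v \<le> (INF pi\<in>PI. pi \<bullet> v)" "(SUP pi\<in>PI. pi \<bullet> v) \<le> p \<bullet> v"
    using ALUP_model_inner_bounds[OF assms(4) prob_simplex_nonneg[OF assms(3)]] by blast+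
  show ?thesis
    using assms(5) u v unfolding induces_simpson_def sure_loss_self_def by linarith
qed

end
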